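(* Let $X$ be an infinite-dimensional real normed linear space with zero $\theta$ whose norm is strictly convex. Then for every $m\in\mathbb{N}$ and every $E$ with $B(\theta,1)\subseteq E\subseteq\overline{B}(\theta,1)$ and $E=\bigcup_{i=1}^m A_i$, where $A_i\cong A_j$ for all $i,j$, either $\theta\in\bigcap_{i=1}^m\mathrm{Int}\,A_i$ or $\theta\notin\bigcup_{i=1}^m\mathrm{Int}\,A_i$.
   Context: $B(\theta,1)=\{x:\|x\|<1\}$, $\overline{B}(\theta,1)=\{x:\|x\|\leqslant1\}$. The norm is strictly convex if for all $x\ne y$ with $\|x\|=\|y\|=1$ and $\lambda\in(0,1)$, $\|\lambda x+(1-\lambda)y\|<1$. Sets $A,B\subseteq X$ are congruent, $A\cong B$, if there is a surjective isometry $f\colon X\to X$ with $f(A)=B$. $\mathrm{Int}\,A$ is the set of $x\in A$ such that some open ball $B(x,\varepsilon)\subseteq A$. *)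

theory Defs
  imports "HOL-Analysis.Analysis"
begin

definition infinite_dimensional :: "'a::real_normed_vector itself \<Rightarrow> bool" where
  "infinite_dimensional _ \<longleftrightarrow> \<not> (\<exists>B::'a set. finite B \<and> span B = UNIV)"

definition strictly_convex_norm :: "'a::real_normed_vector itself \<Rightarrow> bool" where
  "strictly_convex_norm _ \<longleftrightarrow>
     (\<forall>x y::'a. \<forall>t::real. x \<noteq> y \<and> norm x = 1 \<and> norm y = 1 \<and> 0 < t \<and> t < 1
        \<longrightarrow> norm (t *\<^sub>R x + (1 - t) *\<^sub>R y) < 1)"

definition congruent_sets :: "'a::real_normed_vector set \<Rightarrow> 'a set \<Rightarrow> bool" where
  "congruent_sets A B \<longleftrightarrow>
     (\<exists>f::'a \<Rightarrow> 'a. surj f \<and> (\<forall>x y. dist (f x) (f y) = dist x y) \<and> f ` A = B)"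

end

theory Submission
  imports Defs
begin

text \<open>Suppose \<open>0\<close> is interior to some \<open>A\<^sub>i\<close> but not to \<open>A\<^sub>j\<close>. The isometry carrying \<open>A\<^sub>j\<close>
  onto \<open>A\<^sub>i\<close> sends some \<open>c \<noteq> 0\<close> to \<open>0\<close>, so \<open>A\<^sub>j\<close> lies in the lens
  \<open>cball 0 1 \<inter> cball c 1\<close>, and every piece lies in a congruent lens with distinct centres.
  These finitely many closed lenses would then cover the closed unit ball. By strict convexity a
  point of a lens is at distance less than 1 from the midpoint of its centres, whereas in infinite
  dimensions Riesz's lemma with constant 1 yields a unit vector at distance at least 1 from the
  span of all these midpoints.\<close>

lemma le_infdist:
  assumes "A \<noteq> {}" and "\<And>a. a \<in> A \<Longrightarrow> d \<le> dist x a"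
  shows "d \<le> infdist x A"
  unfolding infdist_notempty[OF assms(1)] using assms by (intro cINF_greatest)

lemma continuous_real_attains_global_min:
  fixes g :: "real \<Rightarrow> real"
  assumes "continuous_on UNIV g" and "\<And>t. R < \<bar>t\<bar> \<Longrightarrow> g 0 \<le> g t"
  shows "\<exists>t0. \<forall>t. g t0 \<le> g t"
proof -
  obtain t0 where t0: "\<forall>t\<in>{-\<bar>R\<bar>..\<bar>R\<bar>}. g t0 \<le> g t"
    using continuous_attains_inf[of "{-\<bar>R\<bar>..\<bar>R\<bar>}" g] assms(1)
    by (metis atLeastAtMost_iff compact_Icc continuous_on_subset empty_iff
        abs_ge_zero neg_le_0_iff_le subset_UNIV)
  have "g t0 \<le> g t" for t
  proof (cases "\<bar>t\<bar> \<le> \<bar>R\<bar>")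
    case True
    then have "t \<in> {-\<bar>R\<bar>..\<bar>R\<bar>}" by (simp add: abs_le_iff)
    then show ?thesis using t0 by blast
  next
    case False
    then have "g 0 \<le> g t" using assms(2) by auto
    moreover have "g t0 \<le> g 0" using t0 by auto
    ultimately show ?thesis by linarith
  qed
  then show ?thesis by blast
qed

lemma abs_mult_infdist_subspace_le:
  fixes S :: "'a::real_normed_vector set"
  assumes "subspace S" and "w \<in> S"
  shows "\<bar>t\<bar> * infdist b S \<le> norm (t *\<^sub>R b - w)"
proof (cases "t = 0")
  case True
  then show ?thesis by simp
next
  case False
  have "t *\<^sub>R b - w = t *\<^sub>R (b - w /\<^sub>R t)"
    using False by (simp add: algebra_simps)
  moreover have "infdist b S \<le> norm (b - w /\<^sub>R t)"
    using infdist_le[OF subspace_scale[OF assms]] by (simp add: dist_norm)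
  ultimately show ?thesis by (simp add: mult_left_mono)
qed

lemma infdist_subspace_line_ge:
  fixes S :: "'a::real_normed_vector set"
  assumes "subspace S"
  shows "\<bar>t\<bar> * infdist b S - norm z \<le> infdist (z - t *\<^sub>R b) S"
proof (rule le_infdist)
  show "S \<noteq> {}" using subspace_0[OF assms] by blast
next
  fix w assume "w \<in> S"
  have "\<bar>t\<bar> * infdist b S \<le> norm (t *\<^sub>R b - - w)"
    using abs_mult_infdist_subspace_le[OF assms subspace_neg[OF assms \<open>w \<in> S\<close>]] .
  also have "\<dots> \<le> norm z + dist (z - t *\<^sub>R b) w"
    using norm_triangle_ineq4[of z "z - t *\<^sub>R b - w"] by (simp add: dist_norm algebra_simps)
  finally show "\<bar>t\<bar> * infdist b S - norm z \<le> dist (z - t *\<^sub>R b) w" by simp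
qed

text \<open>Minimise over the coefficient of \<open>b\<close>: \<open>t \<mapsto> infdist (z - t *\<^sub>R b) S\<close> is continuous and
  grows like \<open>\<bar>t\<bar> * infdist b S\<close>, which is positive because the distance from \<open>b\<close> is attained.\<close>
lemma infdist_attained_span_insert:
  fixes S :: "'a::real_normed_vector set"
  assumes S: "subspace S" and attained: "\<And>y. \<exists>w\<in>S. dist y w = infdist y S" and "b \<notin> S"
  shows "\<exists>v\<in>span (insert b S). dist z v = infdist z (span (insert b S))"
proof -
  have span_eq: "span (insert b S) = {u. \<exists>k. u - k *\<^sub>R b \<in> S}"
    using S by (simp add: span_insert span_eq_iff[THEN iffD2])
  obtain wb where "wb \<in> S" "dist b wb = infdist b S" using attained by blast
  then have \<delta>: "infdist b S > 0" using \<open>b \<notin> S\<close> by (metis dist_pos_lt)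
  define g where "g t = infdist (z - t *\<^sub>R b) S" for t
  have "continuous_on UNIV g" unfolding g_def by (intro continuous_intros)
  moreover have "g 0 \<le> g t" if "2 * norm z / infdist b S < \<bar>t\<bar>" for t
  proof -
    have "g 0 \<le> norm z" unfolding g_def using infdist_le[OF subspace_0[OF S], of z] by simp
    also have "\<dots> \<le> \<bar>t\<bar> * infdist b S - norm z" using that \<delta> by (simp add: field_simps)
    also have "\<dots> \<le> g t" unfolding g_def by (rule infdist_subspace_line_ge[OF S])
    finally show ?thesis .
  qed
  ultimately obtain t0 where t0: "\<And>t. g t0 \<le> g t"
    using continuous_real_attains_global_min by blast
  obtain w0 where w0: "w0 \<in> S" "dist (z - t0 *\<^sub>R b) w0 = g t0"
    using attained unfolding g_def by blast
  define v where "v = t0 *\<^sub>R b + w0"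
  have "dist z v \<le> infdist z (span (insert b S))"
  proof (rule le_infdist)
    show "span (insert b S) \<noteq> {}" using span_zero by blast
  next
    fix u assume "u \<in> span (insert b S)"
    then obtain k where k: "u - k *\<^sub>R b \<in> S" unfolding span_eq by blast
    have "dist z v = g t0" using w0(2) unfolding v_def by (simp add: dist_norm algebra_simps)
    also have "\<dots> \<le> g k" by (rule t0)
    also have "\<dots> \<le> dist (z - k *\<^sub>R b) (u - k *\<^sub>R b)" unfolding g_def by (rule infdist_le[OF k])
    also have "\<dots> = dist z u" by (simp add: dist_norm algebra_simps)
    finally show "dist z v \<le> dist z u" .
  qed
  moreover have "v \<in> span (insert b S)"
    unfolding span_eq v_def using w0(1) by (auto intro!: exI[of _ t0])
  ultimately show ?thesis using infdist_le antisym by blast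
qed

lemma infdist_span_attained:
  fixes M :: "'a::real_normed_vector set"
  assumes "finite M"
  shows "\<exists>v\<in>span M. dist z v = infdist z (span M)"
  using assms
proof (induction M arbitrary: z rule: finite_induct)
  case empty
  then show ?case by simp
next
  case (insert b M)
  show ?case
  proof (cases "b \<in> span M")
    case True
    then show ?thesis using insert.IH by (simp add: span_redundant)
  next
    case False
    then show ?thesis
      using infdist_attained_span_insert[of "span M" b z] insert.IH
      by (simp add: span_insert span_span)
  qed
qed

text \<open>Riesz's lemma with constant 1: normalise the difference between a vector outside \<open>span M\<close>
  and a nearest point of \<open>span M\<close>.\<close>
lemma exists_unit_vector_far_from_span:
  fixes M :: "'a::real_normed_vector set"
  assumes "infinite_dimensional TYPE('a)" and "finite M"
  shows "\<exists>x::'a. norm x = 1 \<and> (\<forall>u\<in>span M. 1 \<le> dist x u)"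
proof -
  obtain z where z: "z \<notin> span M" using assms unfolding infinite_dimensional_def by blast
  obtain v where v: "v \<in> span M" "dist z v = infdist z (span M)"
    using infdist_span_attained[OF assms(2)] by blast
  define y where "y = z - v"
  have ny: "norm y > 0" using z v(1) unfolding y_def by auto
  define x where "x = y /\<^sub>R norm y"
  have "1 \<le> dist x u" if "u \<in> span M" for u
  proof -
    have "norm y *\<^sub>R x = y" unfolding x_def using ny by simp
    then have "z - (v + norm y *\<^sub>R u) = norm y *\<^sub>R (x - u)"
      unfolding y_def by (simp add: scaleR_right_diff_distrib)
    then have "norm y * dist x u = dist z (v + norm y *\<^sub>R u)" by (simp add: dist_norm)
    moreover have "v + norm y *\<^sub>R u \<in> span M" using that v(1) by (intro span_add span_scale)
    then have "infdist z (span M) \<le> dist z (v + norm y *\<^sub>R u)" by (rule infdist_le)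
    then have "norm y \<le> dist z (v + norm y *\<^sub>R u)" using v(2) by (simp add: y_def dist_norm)
    ultimately have "norm y * 1 \<le> norm y * dist x u" by simp
    then show ?thesis using ny by simp
  qed
  moreover have "norm x = 1" unfolding x_def using ny by simp
  ultimately show ?thesis by blast
qed

lemma strictly_convex_dist_midpoint_less:
  fixes x p q :: "'a::real_normed_vector"
  assumes "strictly_convex_norm TYPE('a)"
    and "dist x p \<le> 1" and "dist x q \<le> 1" and "p \<noteq> q"
  shows "dist x (midpoint p q) < 1"
proof -
  have "x - midpoint p q = (1/2) *\<^sub>R (x - p) + (1 - 1/2) *\<^sub>R (x - q)"
    unfolding midpoint_def by (simp add: algebra_simps flip: scaleR_add_left)
  moreover have "norm ((1/2) *\<^sub>R (x - p) + (1 - 1/2) *\<^sub>R (x - q)) < (1::real)"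
  proof (cases "norm (x - p) = 1 \<and> norm (x - q) = 1")
    case True
    then show ?thesis
      using assms(1)[unfolded strictly_convex_norm_def, rule_format, of "x - p" "x - q" "1/2"] assms(4)
      by simp
  next
    case False
    have "norm ((1/2) *\<^sub>R (x - p) + (1 - 1/2) *\<^sub>R (x - q)) \<le> (norm (x - p) + norm (x - q)) / 2"
      using norm_triangle_ineq[of "(1/2) *\<^sub>R (x - p)" "(1/2) *\<^sub>R (x - q)"] by simp
    moreover have "norm (x - p) + norm (x - q) < 2" using False assms(2,3) by (auto simp: dist_norm)
    ultimately show ?thesis by simp
  qed
  ultimately show ?thesis by (simp add: dist_norm)
qed

lemma unit_sphere_not_covered_by_lenses:
  fixes p q :: "'i \<Rightarrow> 'a::real_normed_vector"
  assumes "infinite_dimensional TYPE('a)" and "strictly_convex_norm TYPE('a)"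
    and "finite K" and "\<And>k. k \<in> K \<Longrightarrow> p k \<noteq> q k"
  shows "\<not> sphere 0 1 \<subseteq> (\<Union>k\<in>K. cball (p k) 1 \<inter> cball (q k) 1)"
proof
  assume cover: "sphere 0 1 \<subseteq> (\<Union>k\<in>K. cball (p k) 1 \<inter> cball (q k) 1)"
  obtain x :: 'a where x: "norm x = 1" "\<forall>u\<in>span ((\<lambda>k. midpoint (p k) (q k)) ` K). 1 \<le> dist x u"
    using exists_unit_vector_far_from_span[OF assms(1) finite_imageI[OF assms(3)]] by blast
  have "x \<in> sphere 0 1" using x(1) by simp
  then obtain k where k: "k \<in> K" "x \<in> cball (p k) 1" "x \<in> cball (q k) 1"
    using cover by blast
  then have "dist x (midpoint (p k) (q k)) < 1"
    using strictly_convex_dist_midpoint_less[OF assms(2)] assms(4) by (simp add: dist_commute)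
  moreover have "midpoint (p k) (q k) \<in> span ((\<lambda>k. midpoint (p k) (q k)) ` K)"
    using k(1) by (intro span_base imageI)
  ultimately show False using x(2) by fastforce
qed

lemma isometry_interior_image_imp:
  assumes "\<forall>x y. dist (f x) (f y) = dist x y" and "f x \<in> interior (f ` A)"
  shows "x \<in> interior A"
proof -
  obtain \<epsilon> where \<epsilon>: "\<epsilon> > 0" "ball (f x) \<epsilon> \<subseteq> f ` A"
    using assms(2) mem_interior by blast
  have "ball x \<epsilon> \<subseteq> A"
  proof
    fix y assume "y \<in> ball x \<epsilon>"
    then have "f y \<in> f ` A" using \<epsilon>(2) assms(1) by auto
    then obtain a where "a \<in> A" "f a = f y" by auto
    then show "y \<in> A" using assms(1) by (metis dist_eq_0_iff)
  qed
  then show ?thesis using \<epsilon>(1) mem_interior by blast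
qed

lemma congruent_sets_lens:
  assumes "congruent_sets A B" and "A \<subseteq> cball a r \<inter> cball b r"
  shows "\<exists>a' b'. dist a' b' = dist a b \<and> B \<subseteq> cball a' r \<inter> cball b' r"
proof -
  obtain f where f: "\<forall>x y. dist (f x) (f y) = dist x y" "f ` A = B"
    using assms(1) unfolding congruent_sets_def by blast
  have "B \<subseteq> cball (f a) r \<inter> cball (f b) r"
    using assms(2) unfolding f(2)[symmetric] by (auto simp: f(1))
  moreover have "dist (f a) (f b) = dist a b" using f(1) by blast
  ultimately show ?thesis by blast
qed

lemma congruent_sets_interior_lens:
  fixes A B :: "'a::real_normed_vector set"
  assumes "congruent_sets A B" and "0 \<in> interior B" and "0 \<notin> interior A"
    and "A \<subseteq> cball 0 1" and "B \<subseteq> cball 0 1"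
  shows "\<exists>c. c \<noteq> 0 \<and> A \<subseteq> cball 0 1 \<inter> cball c 1"
proof -
  obtain f where f: "surj f" "\<forall>x y. dist (f x) (f y) = dist x y" "f ` A = B"
    using assms(1) unfolding congruent_sets_def by blast
  obtain c where c: "f c = 0" using f(1) by (metis surjD)
  have "c \<in> interior A" using isometry_interior_image_imp[OF f(2), of c A] c f(3) assms(2) by simp
  then have "c \<noteq> 0" using assms(3) by auto
  moreover have "dist c a \<le> 1" if "a \<in> A" for a
  proof -
    have "f a \<in> cball 0 1" using f(3) assms(5) that by blast
    then show ?thesis using f(2) c by (metis mem_cball)
  qed
  ultimately show ?thesis using assms(4) by auto
qed

theorem mainTheorem11:
  fixes E :: "'a::real_normed_vector set" and A :: "nat \<Rightarrow> 'a set" and m :: nat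
  assumes "infinite_dimensional TYPE('a)"
    and "strictly_convex_norm TYPE('a)"
    and "ball 0 1 \<subseteq> E" and "E \<subseteq> cball 0 1"
    and "E = (\<Union>i\<in>{1..m}. A i)"
    and "\<forall>i\<in>{1..m}. \<forall>j\<in>{1..m}. congruent_sets (A i) (A j)"
  shows "0 \<in> (\<Inter>i\<in>{1..m}. interior (A i)) \<or> 0 \<notin> (\<Union>i\<in>{1..m}. interior (A i))"
proof (rule ccontr)
  assume "\<not> ?thesis"
  then obtain i j where ij: "i \<in> {1..m}" "j \<in> {1..m}" "0 \<in> interior (A i)" "0 \<notin> interior (A j)"
    by blast
  have unit: "A k \<subseteq> cball 0 1" if "k \<in> {1..m}" for k using assms(4,5) that by blast
  have "congruent_sets (A j) (A i)" using assms(6) ij(1,2) by blast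
  then obtain c where c: "c \<noteq> 0" "A j \<subseteq> cball 0 1 \<inter> cball c 1"
    using congruent_sets_interior_lens ij(3,4) unit ij(1,2) by blast
  have "\<exists>a b. dist a b = dist 0 c \<and> A k \<subseteq> cball a 1 \<inter> cball b 1" if "k \<in> {1..m}" for k
    using congruent_sets_lens[OF _ c(2)] assms(6) ij(2) that by blast
  then obtain p q where pq: "\<And>k. k \<in> {1..m} \<Longrightarrow>
      dist (p k) (q k) = dist 0 c \<and> A k \<subseteq> cball (p k) 1 \<inter> cball (q k) 1"
    by metis
  define U where "U = (\<Union>k\<in>{1..m}. cball (p k) 1 \<inter> cball (q k) 1)"
  have "ball 0 1 \<subseteq> U"
    using assms(3) unfolding assms(5) U_def by (rule order_trans) (use pq in blast)
  then have "closure (ball 0 1) \<subseteq> U" by (rule closure_minimal) (auto simp: U_def intro!: closed_UN)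
  moreover have "\<not> sphere 0 1 \<subseteq> U"
    unfolding U_def
  proof (rule unit_sphere_not_covered_by_lenses[OF assms(1,2)])
    show "p k \<noteq> q k" if "k \<in> {1..m}" for k using pq[OF that] c(1) by auto
  qed simp
  ultimately show False using sphere_cball[of "0::'a" 1] by auto
qed

end
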